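(* Let $g=g(\lambda,\alpha,\delta)$ be a constraint. Then $T\cap\mathfrak{M}\cap\partial\bar{\mathcal{U}}_g$ is the union of two $2$-dimensional linear subspaces of $\mathbb{R}^5$.
   Context: Fix coordinates in $\mathbb{R}^3$ so that the line $\ell_0$ is the $z$-axis. A constraint is an (oriented) line meeting $\ell_0$ in exactly one point. For $\lambda,\alpha,\delta\in\mathbb{R}$, $g(\lambda,\alpha,\delta)$ denotes the constraint through the points $(0,0,\lambda)$ and $(\cos\alpha,\sin\alpha,\lambda+\delta)$ (every constraint is of this form). Its normal is $\eta_g=\big((1-\lambda)\sin\alpha,\,-(1-\lambda)\cos\alpha,\,\lambda\sin\alpha,\,-\lambda\cos\alpha\big)\in\mathbb{R}^4$. Define the closed halfspace $\bar{\mathcal{U}}_g=\{(u_1,\dots,u_5)\in\mathbb{R}^5\mid \delta u_5+\eta_g\cdot(u_1,u_2,u_3,u_4)\le0\}$, with boundary hyperplane $\partial\bar{\mathcal{U}}_g$. Let $\mathfrak{M}=\{u\in\mathbb{R}^5\mid u_5=u_2u_3-u_1u_4\}$ and $T=\{u\in\mathbb{R}^5\mid u_5=0\}$. *)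

theory Defs
  imports "HOL-Analysis.Analysis"
begin

text \<open>Points of R^5 are elements of real^5 with coordinates u$1,...,u$5;
  R^4 is real^4. The constraint g(lam,alpha,delta) is identified with its parameters.\<close>

definition eta_g :: "real \<Rightarrow> real \<Rightarrow> real^4" where
  "eta_g lam alpha = vector [(1 - lam) * sin alpha, - (1 - lam) * cos alpha,
                             lam * sin alpha, - lam * cos alpha]"

definition first4 :: "real^5 \<Rightarrow> real^4" where
  "first4 u = vector [u$1, u$2, u$3, u$4]"

definition U_bar :: "real \<Rightarrow> real \<Rightarrow> real \<Rightarrow> (real^5) set" where
  "U_bar lam alpha delta = {u. delta * u$5 + eta_g lam alpha \<bullet> first4 u \<le> 0}"

definition bdry_U_bar :: "real \<Rightarrow> real \<Rightarrow> real \<Rightarrow> (real^5) set" where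
  "bdry_U_bar lam alpha delta = {u. delta * u$5 + eta_g lam alpha \<bullet> first4 u = 0}"

definition frakM :: "(real^5) set" where
  "frakM = {u. u$5 = u$2 * u$3 - u$1 * u$4}"

definition T_hyp :: "(real^5) set" where
  "T_hyp = {u. u$5 = 0}"

end

theory Submission
  imports Defs
begin

text \<open>Write \<open>p = (u\<^sub>1, u\<^sub>2)\<close>, \<open>q = (u\<^sub>3, u\<^sub>4)\<close> and \<open>n = (sin \<alpha>, -cos \<alpha>)\<close>. Inside \<open>T\<close>, the
  quadric \<open>\<frakM>\<close> says that \<open>p\<close> and \<open>q\<close> are parallel, and the boundary hyperplane of the
  halfspace says that \<open>n\<close> is orthogonal to \<open>m = (1 - \<lambda>) p + \<lambda> q\<close>. Either \<open>m = 0\<close>,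
  which is one plane, or \<open>m \<noteq> 0\<close>; then \<open>p\<close> and \<open>q\<close> are multiples of \<open>m\<close>, hence orthogonal
  to \<open>n\<close>, so both lie on the line through \<open>(cos \<alpha>, sin \<alpha>)\<close>, which is the other plane.\<close>

lemma exhaust_5:
  fixes x :: 5
  shows "x = 1 \<or> x = 2 \<or> x = 3 \<or> x = 4 \<or> x = 5"
proof (induct x)
  case (of_int z)
  then have "z = 0 \<or> z = 1 \<or> z = 2 \<or> z = 3 \<or> z = 4" by fastforce
  then show ?case by auto
qed

lemma forall_5: "(\<forall>i::5. P i) \<longleftrightarrow> P 1 \<and> P 2 \<and> P 3 \<and> P 4 \<and> P 5"
  by (metis exhaust_5)

lemma vec_eq_iff_5:
  "(x::'a^5) = y \<longleftrightarrow> x$1 = y$1 \<and> x$2 = y$2 \<and> x$3 = y$3 \<and> x$4 = y$4 \<and> x$5 = y$5"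
  by (simp add: vec_eq_iff forall_5)

lemma vector_4 [simp]:
  "(vector [x, y, z, w] :: ('a::zero)^4)$1 = x"
  "(vector [x, y, z, w] :: ('a::zero)^4)$2 = y"
  "(vector [x, y, z, w] :: ('a::zero)^4)$3 = z"
  "(vector [x, y, z, w] :: ('a::zero)^4)$4 = w"
  unfolding vector_def by simp_all

lemma vector_5 [simp]:
  "(vector [x, y, z, w, v] :: ('a::zero)^5)$1 = x"
  "(vector [x, y, z, w, v] :: ('a::zero)^5)$2 = y"
  "(vector [x, y, z, w, v] :: ('a::zero)^5)$3 = z"
  "(vector [x, y, z, w, v] :: ('a::zero)^5)$4 = w"
  "(vector [x, y, z, w, v] :: ('a::zero)^5)$5 = v"
  unfolding vector_def by simp_all

lemma span_pair_iff: "x \<in> span {a, b} \<longleftrightarrow> (\<exists>k j. x = k *\<^sub>R a + j *\<^sub>R b)"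
  unfolding span_insert span_singleton by (auto simp: algebra_simps)

lemma dim_span_pair:
  fixes a b :: "'a::euclidean_space"
  assumes "b \<noteq> 0" and "\<And>k. a \<noteq> k *\<^sub>R b"
  shows "dim (span {a, b}) = 2"
proof -
  have "a \<notin> span {b}" "a \<noteq> b"
    using assms(2) assms(2)[of 1] unfolding span_singleton by auto
  then have "independent {a, b}"
    using assms(1) by (simp add: independent_insert)
  moreover have "card {a, b} = 2"
    using \<open>a \<noteq> b\<close> by simp
  ultimately show ?thesis
    by (metis dim_span_eq_card_independent)
qed

lemma parallel_to_orthogonal_is_orthogonal:
  fixes s c p1 p2 m1 m2 :: real
  assumes parallel: "p1 * m2 = p2 * m1" and orth: "s * m1 = c * m2"
    and nonzero: "m1 \<noteq> 0 \<or> m2 \<noteq> 0"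
  shows "s * p1 = c * p2"
proof -
  have "m1 * (s * p1 - c * p2) = p1 * (s * m1) - c * (p2 * m1)"
    by (simp add: algebra_simps)
  also have "\<dots> = 0"
    unfolding orth parallel[symmetric] by (simp add: algebra_simps)
  finally have "m1 * (s * p1 - c * p2) = 0" .
  moreover have "m2 * (s * p1 - c * p2) = s * (p1 * m2) - p2 * (c * m2)"
    by (simp add: algebra_simps)
  moreover have "\<dots> = 0"
    unfolding orth[symmetric] parallel by (simp add: algebra_simps)
  ultimately show ?thesis
    using nonzero by auto
qed

lemma unit_vector_multiple:
  fixes a b s c :: real
  assumes unit: "s * s + c * c = 1" and orth: "s * a = c * b"
  shows "a = (c * a + s * b) * c" "b = (c * a + s * b) * s"
proof -
  have "(c * a + s * b) * c = (s * s + c * c) * a"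
    using orth by (simp add: algebra_simps)
  then show "a = (c * a + s * b) * c"
    using unit by simp
  have "(c * a + s * b) * s = (s * s + c * c) * b"
    using orth[symmetric] by (simp add: algebra_simps)
  then show "b = (c * a + s * b) * s"
    using unit by simp
qed

lemma inner_eta_g_first4:
  "eta_g lam alpha \<bullet> first4 u =
     (1 - lam) * (sin alpha * u$1 - cos alpha * u$2) + lam * (sin alpha * u$3 - cos alpha * u$4)"
  unfolding eta_g_def first4_def inner_vec_def sum_4 by (simp add: algebra_simps)

lemma mem_T_frakM_bdry_U_bar_iff:
  "u \<in> T_hyp \<inter> frakM \<inter> bdry_U_bar lam alpha delta \<longleftrightarrow>
     u$5 = 0 \<and> u$1 * u$4 = u$2 * u$3 \<and>
     sin alpha * ((1 - lam) * u$1 + lam * u$3) = cos alpha * ((1 - lam) * u$2 + lam * u$4)"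
  unfolding T_hyp_def frakM_def bdry_U_bar_def inner_eta_g_first4
  by (auto simp: algebra_simps)

lemma T_frakM_bdry_U_bar_eq:
  "T_hyp \<inter> frakM \<inter> bdry_U_bar lam alpha delta =
     span {vector [cos alpha, sin alpha, 0, 0, 0], vector [0, 0, cos alpha, sin alpha, 0]} \<union>
     span {vector [lam, 0, lam - 1, 0, 0], vector [0, lam, 0, lam - 1, 0]}"
  (is "_ = span {?v1, ?v2} \<union> span {?w1, ?w2}")
proof (rule set_eqI)
  fix u :: "real^5"
  define s c where "s = sin alpha" and "c = cos alpha"
  define m1 m2 where "m1 = (1 - lam) * u$1 + lam * u$3" and "m2 = (1 - lam) * u$2 + lam * u$4"
  have unit: "s * s + c * c = 1"
    unfolding s_def c_def by (metis power2_eq_square sin_cos_squared_add)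
  have "u \<in> T_hyp \<inter> frakM \<inter> bdry_U_bar lam alpha delta \<longleftrightarrow>
          u$5 = 0 \<and> u$1 * u$4 = u$2 * u$3 \<and> s * m1 = c * m2"
    unfolding mem_T_frakM_bdry_U_bar_iff s_def c_def m1_def m2_def ..
  also have "\<dots> \<longleftrightarrow> u \<in> span {?v1, ?v2} \<union> span {?w1, ?w2}"
    unfolding Un_iff span_pair_iff
  proof
    assume u: "u$5 = 0 \<and> u$1 * u$4 = u$2 * u$3 \<and> s * m1 = c * m2"
    show "(\<exists>k j. u = k *\<^sub>R ?v1 + j *\<^sub>R ?v2) \<or> (\<exists>k j. u = k *\<^sub>R ?w1 + j *\<^sub>R ?w2)"
    proof (cases "m1 = 0 \<and> m2 = 0")
      case True
      then have "u = (u$1 - u$3) *\<^sub>R ?w1 + (u$2 - u$4) *\<^sub>R ?w2"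
        using u by (simp add: vec_eq_iff_5 m1_def m2_def algebra_simps)
      then show ?thesis by blast
    next
      case False
      have "u$1 * m2 = u$2 * m1" "u$3 * m2 = u$4 * m1"
        using u by (auto simp: m1_def m2_def algebra_simps)
      then have "s * u$1 = c * u$2" "s * u$3 = c * u$4"
        using parallel_to_orthogonal_is_orthogonal u False by blast+
      then obtain k j where "u$1 = k * c" "u$2 = k * s" "u$3 = j * c" "u$4 = j * s"
        using unit_vector_multiple[OF unit] by metis
      then have "u = k *\<^sub>R vector [c, s, 0, 0, 0] + j *\<^sub>R vector [0, 0, c, s, 0]"
        using u by (simp add: vec_eq_iff_5)
      then show ?thesis
        unfolding s_def c_def by blast
    qed
  next
    assume "(\<exists>k j. u = k *\<^sub>R ?v1 + j *\<^sub>R ?v2) \<or> (\<exists>k j. u = k *\<^sub>R ?w1 + j *\<^sub>R ?w2)"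
    then show "u$5 = 0 \<and> u$1 * u$4 = u$2 * u$3 \<and> s * m1 = c * m2"
    proof (elim disjE exE)
      fix k j
      assume "u = k *\<^sub>R ?v1 + j *\<^sub>R ?v2"
      then show ?thesis
        by (simp add: m1_def m2_def s_def c_def algebra_simps)
    next
      fix k j
      assume "u = k *\<^sub>R ?w1 + j *\<^sub>R ?w2"
      then show ?thesis
        by (simp add: m1_def m2_def algebra_simps)
    qed
  qed
  finally show "u \<in> T_hyp \<inter> frakM \<inter> bdry_U_bar lam alpha delta \<longleftrightarrow>
                  u \<in> span {?v1, ?v2} \<union> span {?w1, ?w2}" .
qed

lemma cos_or_sin_nonzero: "cos (x::real) \<noteq> 0 \<or> sin x \<noteq> 0"
  using sin_cos_squared_add[of x] by (auto simp del: sin_cos_squared_add)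

lemma span_pairs_distinct:
  "span {vector [cos alpha, sin alpha, 0, 0, 0], vector [0, 0, cos alpha, sin alpha, 0]} \<noteq>
   span {vector [lam, 0, lam - 1, 0, 0], vector [0, lam, 0, lam - 1, 0] :: real^5}"
  (is "span {?v1, ?v2} \<noteq> span {?w1, ?w2}")
proof
  assume "span {?v1, ?v2} = span {?w1, ?w2}"
  then have "?v1 \<in> span {?w1, ?w2}" "?v2 \<in> span {?w1, ?w2}"
    using span_base[of ?v1 "{?v1, ?v2}"] span_base[of ?v2 "{?v1, ?v2}"] by auto
  then obtain k j k' j' where "?v1 = k *\<^sub>R ?w1 + j *\<^sub>R ?w2" "?v2 = k' *\<^sub>R ?w1 + j' *\<^sub>R ?w2"
    unfolding span_pair_iff by blast
  then have "cos alpha = k * lam" "sin alpha = j * lam" "k' * lam = 0" "j' * lam = 0"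
    "cos alpha = k' * (lam - 1)" "sin alpha = j' * (lam - 1)"
    unfolding vec_eq_iff_5 by simp_all
  then have "cos alpha = 0" "sin alpha = 0"
    by (cases "lam = 0"; simp)+
  then show False
    using cos_or_sin_nonzero by blast
qed

theorem lemma9:
  fixes lam alpha delta :: real
  shows "\<exists>V W :: (real^5) set. subspace V \<and> dim V = 2 \<and> subspace W \<and> dim W = 2 \<and> V \<noteq> W \<and>
           T_hyp \<inter> frakM \<inter> bdry_U_bar lam alpha delta = V \<union> W"
proof -
  let ?v1 = "vector [cos alpha, sin alpha, 0, 0, 0] :: real^5"
  let ?v2 = "vector [0, 0, cos alpha, sin alpha, 0] :: real^5"
  let ?w1 = "vector [lam, 0, lam - 1, 0, 0] :: real^5"
  let ?w2 = "vector [0, lam, 0, lam - 1, 0] :: real^5"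
  have "dim (span {?v1, ?v2}) = 2"
    using cos_or_sin_nonzero[of alpha] by (intro dim_span_pair) (auto simp: vec_eq_iff_5)
  moreover have "dim (span {?w1, ?w2}) = 2"
    by (intro dim_span_pair) (auto simp: vec_eq_iff_5)
  moreover note span_pairs_distinct
  ultimately show ?thesis
    using T_frakM_bdry_U_bar_eq by (intro exI[of _ "span {?v1, ?v2}"] exI[of _ "span {?w1, ?w2}"]) auto
qed

end
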